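(* For any positive integer $T$, $x \in \{0,1\}^T$, $p \in [0,1]^T$, $m = |\{p_1,\ldots,p_T\}|$ and $\epsilon > 0$, there exist a set $S \subset [0,1]$ of size at most $2m+3$ and distributions $\mathcal{D}_1,\ldots,\mathcal{D}_T$ supported on $S$ such that $\mathcal{D} = (\mathcal{D}_1,\ldots,\mathcal{D}_T) \in \underline{\mathcal{C}}(x)$ and $\|p - \mathcal{D}\|_1 \le 20\cdot \mathsf{LowerCalDist}(x,p) + \epsilon$.
   Context: Let $\underline{\mathcal{C}}(x)$ be the set of $T$-tuples $\mathcal{D} = (\mathcal{D}_1,\ldots,\mathcal{D}_T)$ of probability distributions, each with finite support contained in $[0,1]$, such that $\sum_{t=1}^T (x_t - \alpha)\mathcal{D}_t(\alpha) = 0$ for every $\alpha \in [0,1]$. For such $\mathcal{D}$, $\|p - \mathcal{D}\|_1 = \sum_{t=1}^T \mathbb{E}_{q_t \sim \mathcal{D}_t}|p_t - q_t|$, and $\mathsf{LowerCalDist}(x,p) = \inf_{\mathcal{D} \in \underline{\mathcal{C}}(x)} \|p - \mathcal{D}\|_1$. *)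

theory Defs
  imports "HOL-Probability.Probability"
begin

(* Time steps are indexed by t \<in> {..<T} (i.e. 0..T-1 instead of 1..T).
   A T-tuple of distributions is a function D :: nat \<Rightarrow> real pmf; only D t for t < T matter. *)

definition lower_cal_set :: "nat \<Rightarrow> (nat \<Rightarrow> real) \<Rightarrow> (nat \<Rightarrow> real pmf) set" where
  "lower_cal_set T x = {D.
     (\<forall>t<T. finite (set_pmf (D t)) \<and> set_pmf (D t) \<subseteq> {0..1}) \<and>
     (\<forall>\<alpha>\<in>{0..1::real}. (\<Sum>t<T. (x t - \<alpha>) * pmf (D t) \<alpha>) = 0)}"

definition l1_dist :: "nat \<Rightarrow> (nat \<Rightarrow> real) \<Rightarrow> (nat \<Rightarrow> real pmf) \<Rightarrow> real" where
  "l1_dist T p D = (\<Sum>t<T. measure_pmf.expectation (D t) (\<lambda>q. \<bar>p t - q\<bar>))"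

definition LowerCalDist :: "nat \<Rightarrow> (nat \<Rightarrow> real) \<Rightarrow> (nat \<Rightarrow> real) \<Rightarrow> real" where
  "LowerCalDist T x p = (INF D\<in>lower_cal_set T x. l1_dist T p D)"

end

theory Submission
  imports Defs
begin

(* Take a calibrated tuple D whose cost is within \<epsilon> of LowerCalDist. Time steps with the
   same pair (p t, x t) are interchangeable, so D is summarised by the matrix W c a of the mass
   that the at most 2m classes c put on the support points a. Calibration at a involves only
   column a and survives any nonnegative rescaling of that column, while preserving the class
   masses imposes only card C linear conditions on the column scalings. Hence, as long as there
   are more columns than classes, there is a null direction for the scalings; following it in
   the direction that does not increase the (linear) cost until a column vanishes shrinks the
   support. This leaves at most 2m points at no extra cost, and spreading each class's mass
   evenly over its time steps gives the tuple. *)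

lemma exists_nontrivial_vanishing_combination:
  fixes f :: "'u \<Rightarrow> 'k \<Rightarrow> 'a::field"
  assumes "finite K" "finite U" "card K < card U"
  shows "\<exists>l. (\<exists>a\<in>U. l a \<noteq> 0) \<and> (\<forall>c\<in>K. (\<Sum>a\<in>U. l a * f a c) = 0)"
  using assms
proof (induction K arbitrary: U f rule: finite_induct)
  case empty
  then obtain a where "a \<in> U" by fastforce
  then show ?case by (intro exI[of _ "\<lambda>b. if b = a then 1 else 0"]) auto
next
  case (insert c K)
  show ?case
  proof (cases "\<forall>a\<in>U. f a c = 0")
    case True
    from insert.IH[of U f] insert.prems insert.hyps obtain l
      where "\<exists>a\<in>U. l a \<noteq> 0" "\<forall>d\<in>K. (\<Sum>a\<in>U. l a * f a d) = 0"
      by auto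
    with True show ?thesis by (intro exI[of _ l]) auto
  next
    case False
    then obtain a0 where a0: "a0 \<in> U" "f a0 c \<noteq> 0" by blast
    \<comment> \<open>Gaussian elimination: clear coordinate c using the vector of a0.\<close>
    define g where "g a d = f a d - (f a c / f a0 c) * f a0 d" for a d
    have "card K < card (U - {a0})" using insert a0 by simp
    with insert.IH[of "U - {a0}" g] insert.prems obtain l
      where l: "\<exists>a\<in>U - {a0}. l a \<noteq> 0" "\<forall>d\<in>K. (\<Sum>a\<in>U - {a0}. l a * g a d) = 0"
      by auto
    define l' where "l' a = (if a = a0 then - (\<Sum>b\<in>U - {a0}. l b * f b c) / f a0 c else l a)" for a
    have split: "(\<Sum>a\<in>U. l' a * f a d) = l' a0 * f a0 d + (\<Sum>a\<in>U - {a0}. l a * f a d)" for d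
      using sum.remove[OF insert.prems(1) a0(1), of "\<lambda>a. l' a * f a d"] by (simp add: l'_def)
    have reduced: "(\<Sum>a\<in>U - {a0}. l a * g a d)
        = (\<Sum>a\<in>U - {a0}. l a * f a d) - (\<Sum>a\<in>U - {a0}. l a * f a c) / f a0 c * f a0 d" for d
      unfolding g_def
      by (simp add: right_diff_distrib sum_subtractf sum_distrib_left sum_distrib_right
          sum_divide_distrib mult.commute mult.left_commute)
    have "(\<Sum>a\<in>U. l' a * f a d) = 0" if "d \<in> insert c K" for d
      using that
    proof
      assume "d = c"
      then show ?thesis using a0 by (simp only: split) (simp add: l'_def)
    next
      assume "d \<in> K"
      then show ?thesis using l(2) reduced[of d] by (simp only: split) (simp add: l'_def)
    qed
    moreover have "\<exists>a\<in>U. l' a \<noteq> 0" using l(1) by (auto simp: l'_def)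
    ultimately show ?thesis by blast
  qed
qed

lemma rescaling_along_null_direction:
  fixes W \<kappa> :: "'c \<Rightarrow> 'a \<Rightarrow> real"
  assumes fin: "finite U" and neg: "\<exists>a\<in>U. \<mu> a < 0"
    and null: "\<forall>c\<in>C. (\<Sum>a\<in>U. \<mu> a * W c a) = 0"
    and descent: "(\<Sum>a\<in>U. \<mu> a * (\<Sum>c\<in>C. \<kappa> c a * W c a)) \<le> 0"
  shows "\<exists>a0\<in>U. \<exists>\<theta>. \<theta> a0 = 0 \<and> (\<forall>a\<in>U. 0 \<le> \<theta> a) \<and>
     (\<forall>c\<in>C. (\<Sum>a\<in>U. \<theta> a * W c a) = (\<Sum>a\<in>U. W c a)) \<and>
     (\<Sum>a\<in>U. \<Sum>c\<in>C. \<kappa> c a * (\<theta> a * W c a)) \<le> (\<Sum>a\<in>U. \<Sum>c\<in>C. \<kappa> c a * W c a)"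
proof -
  define k where "k a = (\<Sum>c\<in>C. \<kappa> c a * W c a)" for a
  have "U \<noteq> {}" using neg by blast
  define a0 where "a0 = arg_min_on \<mu> U"
  have a0: "a0 \<in> U" "\<forall>a\<in>U. \<mu> a0 \<le> \<mu> a"
    using arg_min_if_finite[OF fin \<open>U \<noteq> {}\<close>, of \<mu>] by (auto simp: a0_def not_less)
  have a0_neg: "\<mu> a0 < 0" using a0 neg by force
  define \<theta> where "\<theta> a = 1 - \<mu> a / \<mu> a0" for a
  have rescaled_sum: "(\<Sum>a\<in>U. \<theta> a * h a) = (\<Sum>a\<in>U. h a) - (\<Sum>a\<in>U. \<mu> a * h a) / \<mu> a0" for h
    by (simp add: \<theta>_def left_diff_distrib sum_subtractf sum_divide_distrib)
  have "\<theta> a0 = 0" using a0_neg by (simp add: \<theta>_def)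
  moreover have "0 \<le> \<theta> a" if "a \<in> U" for a
    using a0 a0_neg that by (simp add: \<theta>_def divide_le_eq_1)
  moreover have "(\<Sum>a\<in>U. \<theta> a * W c a) = (\<Sum>a\<in>U. W c a)" if "c \<in> C" for c
    using null that by (simp add: rescaled_sum)
  moreover have "(\<Sum>a\<in>U. \<Sum>c\<in>C. \<kappa> c a * (\<theta> a * W c a)) \<le> (\<Sum>a\<in>U. \<Sum>c\<in>C. \<kappa> c a * W c a)"
  proof -
    have "(\<Sum>a\<in>U. \<Sum>c\<in>C. \<kappa> c a * (\<theta> a * W c a)) = (\<Sum>a\<in>U. \<theta> a * k a)"
      by (simp add: k_def sum_distrib_left mult.left_commute)
    also have "\<dots> = (\<Sum>a\<in>U. k a) - (\<Sum>a\<in>U. \<mu> a * k a) / \<mu> a0" by (rule rescaled_sum)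
    also have "\<dots> \<le> (\<Sum>a\<in>U. k a)" using descent a0_neg by (simp add: k_def divide_nonpos_neg)
    finally show ?thesis by (simp add: k_def)
  qed
  ultimately show ?thesis using a0(1) by blast
qed

lemma column_rescaling_step:
  fixes W \<kappa> :: "'c \<Rightarrow> 'a \<Rightarrow> real"
  assumes fin: "finite C" "finite U" and big: "card C < card U"
    and nonneg: "\<forall>c\<in>C. \<forall>a\<in>U. 0 \<le> W c a"
  shows "\<exists>a0\<in>U. \<exists>\<theta>. \<theta> a0 = 0 \<and> (\<forall>a\<in>U. 0 \<le> \<theta> a) \<and>
     (\<forall>c\<in>C. (\<Sum>a\<in>U. \<theta> a * W c a) = (\<Sum>a\<in>U. W c a)) \<and>
     (\<Sum>a\<in>U. \<Sum>c\<in>C. \<kappa> c a * (\<theta> a * W c a)) \<le> (\<Sum>a\<in>U. \<Sum>c\<in>C. \<kappa> c a * W c a)"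
proof (cases "\<exists>a0\<in>U. \<forall>c\<in>C. W c a0 = 0")
  case True
  then obtain a0 where a0: "a0 \<in> U" "\<forall>c\<in>C. W c a0 = 0" by blast
  define \<theta> where "\<theta> a = (if a = a0 then 0 else 1 :: real)" for a
  have unchanged: "\<theta> a * W c a = W c a" if "c \<in> C" for a c using a0 that by (simp add: \<theta>_def)
  have "(\<Sum>a\<in>U. \<theta> a * W c a) = (\<Sum>a\<in>U. W c a)" if "c \<in> C" for c
    using that by (intro sum.cong refl unchanged)
  moreover have "(\<Sum>a\<in>U. \<Sum>c\<in>C. \<kappa> c a * (\<theta> a * W c a)) = (\<Sum>a\<in>U. \<Sum>c\<in>C. \<kappa> c a * W c a)"
    by (intro sum.cong refl) (simp add: unchanged)
  ultimately show ?thesis using a0 by (intro bexI[of _ a0] exI[of _ \<theta>]) (auto simp: \<theta>_def)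
next
  case False
  define k where "k a = (\<Sum>c\<in>C. \<kappa> c a * W c a)" for a
  obtain l where l: "\<exists>a\<in>U. l a \<noteq> 0" "\<forall>c\<in>C. (\<Sum>a\<in>U. l a * W c a) = 0"
    using exists_nontrivial_vanishing_combination[of C U "\<lambda>a c. W c a"] fin big by blast
  define \<mu> where "\<mu> = (if (\<Sum>a\<in>U. l a * k a) \<le> 0 then l else (\<lambda>a. - l a))"
  have \<mu>_null: "\<forall>c\<in>C. (\<Sum>a\<in>U. \<mu> a * W c a) = 0" using l(2) by (auto simp: \<mu>_def sum_negf)
  have \<mu>_descent: "(\<Sum>a\<in>U. \<mu> a * k a) \<le> 0" by (auto simp: \<mu>_def sum_negf)
  \<comment> \<open>As W is nonnegative without zero columns, a nonzero null direction has a negative entry.\<close>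
  have "\<exists>a\<in>U. \<mu> a < 0"
  proof (rule ccontr)
    assume "\<not> ?thesis"
    then have pos: "\<forall>a\<in>U. 0 \<le> \<mu> a" by auto
    from l(1) obtain a1 where a1: "a1 \<in> U" "\<mu> a1 \<noteq> 0" by (auto simp: \<mu>_def)
    from False a1 obtain c1 where c1: "c1 \<in> C" "W c1 a1 \<noteq> 0" by blast
    have "0 < \<mu> a1 * W c1 a1" using pos nonneg a1 c1 by (simp add: less_le)
    also have "\<dots> \<le> (\<Sum>a\<in>U. \<mu> a * W c1 a)"
      using pos nonneg c1 a1 fin by (intro member_le_sum) auto
    finally show False using \<mu>_null c1 by simp
  qed
  then show ?thesis
    using rescaling_along_null_direction[OF fin(2) _ \<mu>_null] \<mu>_descent by (simp add: k_def)
qed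

lemma sparse_column_rescaling:
  fixes W \<kappa> :: "'c \<Rightarrow> 'a \<Rightarrow> real"
  assumes "finite C" "finite U" "\<forall>c\<in>C. \<forall>a\<in>U. 0 \<le> W c a"
  shows "\<exists>U' \<theta>. U' \<subseteq> U \<and> card U' \<le> card C \<and> (\<forall>a\<in>U'. 0 \<le> \<theta> a) \<and>
     (\<forall>c\<in>C. (\<Sum>a\<in>U'. \<theta> a * W c a) = (\<Sum>a\<in>U. W c a)) \<and>
     (\<Sum>a\<in>U'. \<Sum>c\<in>C. \<kappa> c a * (\<theta> a * W c a)) \<le> (\<Sum>a\<in>U. \<Sum>c\<in>C. \<kappa> c a * W c a)"
  using assms
proof (induction "card U" arbitrary: U W rule: less_induct)
  case less
  show ?case
  proof (cases "card U \<le> card C")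
    case True
    then show ?thesis using less.prems by (intro exI[of _ U] exI[of _ "\<lambda>_. 1"]) auto
  next
    case False
    then have "card C < card U" by simp
    then obtain a0 \<theta> where a0: "a0 \<in> U" "\<theta> a0 = 0" and \<theta>_nonneg: "\<forall>a\<in>U. 0 \<le> \<theta> a"
      and \<theta>_rows: "\<forall>c\<in>C. (\<Sum>a\<in>U. \<theta> a * W c a) = (\<Sum>a\<in>U. W c a)"
      and \<theta>_cost: "(\<Sum>a\<in>U. \<Sum>c\<in>C. \<kappa> c a * (\<theta> a * W c a)) \<le> (\<Sum>a\<in>U. \<Sum>c\<in>C. \<kappa> c a * W c a)"
      using column_rescaling_step[OF less.prems(1,2) _ less.prems(3), of \<kappa>] by blast
    define W' where "W' c a = \<theta> a * W c a" for c a
    have drop_a0: "(\<Sum>a\<in>U - {a0}. h a) = (\<Sum>a\<in>U. h a)" if "h a0 = 0" for h :: "'a \<Rightarrow> real"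
      using sum.remove[OF less.prems(2) a0(1), of h] that by simp
    have smaller: "card (U - {a0}) < card U" using less.prems(2) a0(1) by (rule card_Diff1_less)
    have W'_nonneg: "\<forall>c\<in>C. \<forall>a\<in>U - {a0}. 0 \<le> W' c a" using less.prems(3) \<theta>_nonneg by (simp add: W'_def)
    obtain U' \<theta>' where U': "U' \<subseteq> U - {a0}" "card U' \<le> card C" "\<forall>a\<in>U'. 0 \<le> \<theta>' a"
      and rows': "\<forall>c\<in>C. (\<Sum>a\<in>U'. \<theta>' a * W' c a) = (\<Sum>a\<in>U - {a0}. W' c a)"
      and cost': "(\<Sum>a\<in>U'. \<Sum>c\<in>C. \<kappa> c a * (\<theta>' a * W' c a)) \<le> (\<Sum>a\<in>U - {a0}. \<Sum>c\<in>C. \<kappa> c a * W' c a)"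
      using less.hyps[OF smaller less.prems(1) finite_Diff[OF less.prems(2)] W'_nonneg] by blast
    show ?thesis
    proof (intro exI[of _ U'] exI[of _ "\<lambda>a. \<theta>' a * \<theta> a"] conjI ballI)
      show "U' \<subseteq> U" "card U' \<le> card C" using U'(1,2) by auto
      show "0 \<le> \<theta>' a * \<theta> a" if "a \<in> U'" for a using U' \<theta>_nonneg that by auto
    next
      fix c assume c: "c \<in> C"
      have "(\<Sum>a\<in>U'. \<theta>' a * \<theta> a * W c a) = (\<Sum>a\<in>U - {a0}. W' c a)"
        using rows' c by (simp add: W'_def mult.assoc)
      also have "\<dots> = (\<Sum>a\<in>U. W c a)" using drop_a0[of "W' c"] a0(2) \<theta>_rows c by (simp add: W'_def)
      finally show "(\<Sum>a\<in>U'. \<theta>' a * \<theta> a * W c a) = (\<Sum>a\<in>U. W c a)" .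
    next
      have "(\<Sum>a\<in>U'. \<Sum>c\<in>C. \<kappa> c a * (\<theta>' a * \<theta> a * W c a)) \<le> (\<Sum>a\<in>U - {a0}. \<Sum>c\<in>C. \<kappa> c a * W' c a)"
        using cost' by (simp add: W'_def mult.assoc)
      also have "\<dots> = (\<Sum>a\<in>U. \<Sum>c\<in>C. \<kappa> c a * W' c a)" using a0(2) by (intro drop_a0) (simp add: W'_def)
      also have "\<dots> \<le> (\<Sum>a\<in>U. \<Sum>c\<in>C. \<kappa> c a * W c a)" using \<theta>_cost by (simp add: W'_def)
      finally show "(\<Sum>a\<in>U'. \<Sum>c\<in>C. \<kappa> c a * (\<theta>' a * \<theta> a * W c a)) \<le> (\<Sum>a\<in>U. \<Sum>c\<in>C. \<kappa> c a * W c a)" .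
    qed
  qed
qed

lemma pmf_embed_pmf_finite:
  fixes f :: "'a \<Rightarrow> real"
  assumes "finite A" "\<forall>a\<in>A. 0 \<le> f a" "(\<Sum>a\<in>A. f a) = 1"
  shows "pmf (embed_pmf (\<lambda>a. if a \<in> A then f a else 0)) b = (if b \<in> A then f b else 0)"
proof (rule pmf_embed_pmf)
  show "0 \<le> (if a \<in> A then f a else 0)" for a using assms(2) by simp
  have "(\<integral>\<^sup>+a. ennreal (if a \<in> A then f a else 0) \<partial>count_space UNIV) = (\<Sum>a\<in>A. ennreal (f a))"
    using assms(1) by (subst nn_integral_count_space') auto
  also have "\<dots> = 1" using assms(2,3) by (simp add: sum_ennreal)
  finally show "(\<integral>\<^sup>+a. ennreal (if a \<in> A then f a else 0) \<partial>count_space UNIV) = 1" .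
qed

definition fiber_weight :: "nat \<Rightarrow> (nat \<Rightarrow> 'c) \<Rightarrow> (nat \<Rightarrow> 'a pmf) \<Rightarrow> 'c \<Rightarrow> 'a \<Rightarrow> real" where
  "fiber_weight T g D c a = (\<Sum>t\<in>{t\<in>{..<T}. g t = c}. pmf (D t) a)"

lemma fiber_weight_nonneg: "0 \<le> fiber_weight T g D c a"
  unfolding fiber_weight_def by (intro sum_nonneg) simp

lemma sum_pmf_over_fibers:
  "(\<Sum>t<T. f (g t) * pmf (D t) a) = (\<Sum>c\<in>g ` {..<T}. f c * fiber_weight T g D c a)"
proof -
  have "(\<Sum>t<T. f (g t) * pmf (D t) a) = (\<Sum>c\<in>g ` {..<T}. \<Sum>t\<in>{t\<in>{..<T}. g t = c}. f (g t) * pmf (D t) a)"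
    by (rule sum.image_gen) simp
  also have "\<dots> = (\<Sum>c\<in>g ` {..<T}. f c * fiber_weight T g D c a)"
    unfolding fiber_weight_def sum_distrib_left by (intro sum.cong refl) auto
  finally show ?thesis .
qed

lemma sum_fiber_weight:
  assumes "finite A" "\<forall>t<T. set_pmf (D t) \<subseteq> A"
  shows "(\<Sum>a\<in>A. fiber_weight T g D c a) = card {t\<in>{..<T}. g t = c}"
proof -
  have "(\<Sum>a\<in>A. fiber_weight T g D c a) = (\<Sum>t\<in>{t\<in>{..<T}. g t = c}. \<Sum>a\<in>A. pmf (D t) a)"
    unfolding fiber_weight_def by (rule sum.swap)
  also have "\<dots> = (\<Sum>t\<in>{t\<in>{..<T}. g t = c}. 1)"
    using assms by (intro sum.cong refl sum_pmf_eq_1) auto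
  finally show ?thesis by simp
qed

lemma fiber_weight_realizable:
  fixes V :: "'c \<Rightarrow> 'a \<Rightarrow> real"
  assumes fin: "finite A" and nonneg: "\<forall>c\<in>g ` {..<T}. \<forall>a\<in>A. 0 \<le> V c a"
    and rows: "\<forall>c\<in>g ` {..<T}. (\<Sum>a\<in>A. V c a) = card {t\<in>{..<T}. g t = c}"
  shows "\<exists>D. (\<forall>t<T. set_pmf (D t) \<subseteq> A) \<and> (\<forall>c\<in>g ` {..<T}. \<forall>a\<in>A. fiber_weight T g D c a = V c a)"
proof -
  define n where "n c = real (card {t\<in>{..<T}. g t = c})" for c
  have n_pos: "0 < n (g t)" if "t < T" for t using that by (auto simp: n_def card_gt_0_iff)
  define D where "D t = embed_pmf (\<lambda>a. if a \<in> A then V (g t) a / n (g t) else 0)" for t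
  have pmf_D: "pmf (D t) a = (if a \<in> A then V (g t) a / n (g t) else 0)" if "t < T" for t a
    unfolding D_def
  proof (rule pmf_embed_pmf_finite[OF fin])
    show "\<forall>a\<in>A. 0 \<le> V (g t) a / n (g t)" using nonneg n_pos[OF that] that by simp
    show "(\<Sum>a\<in>A. V (g t) a / n (g t)) = 1"
      using rows n_pos[OF that] that by (auto simp: n_def sum_divide_distrib[symmetric])
  qed
  have "set_pmf (D t) \<subseteq> A" if "t < T" for t using pmf_D[OF that] by (auto simp: set_pmf_eq)
  moreover have "fiber_weight T g D c a = V c a" if "c \<in> g ` {..<T}" "a \<in> A" for c a
  proof -
    have "fiber_weight T g D c a = (\<Sum>t\<in>{t\<in>{..<T}. g t = c}. V c a / n c)"
      unfolding fiber_weight_def using that by (intro sum.cong refl) (auto simp: pmf_D)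
    also have "\<dots> = V c a" using that n_pos by (auto simp: n_def)
    finally show ?thesis .
  qed
  ultimately show ?thesis by blast
qed

lemma l1_dist_finite_support:
  assumes "finite A" "\<forall>t<T. set_pmf (D t) \<subseteq> A"
  shows "l1_dist T p D = (\<Sum>t<T. \<Sum>a\<in>A. \<bar>p t - a\<bar> * pmf (D t) a)"
  unfolding l1_dist_def using assms by (intro sum.cong refl integral_measure_pmf_real) auto

lemma calibration_sum_fiber_weight:
  "(\<Sum>t<T. (x t - a) * pmf (D t) a) =
    (\<Sum>c\<in>(\<lambda>t. (p t, x t)) ` {..<T}. (snd c - a) * fiber_weight T (\<lambda>t. (p t, x t)) D c a)"
  using sum_pmf_over_fibers[where f = "\<lambda>c. snd c - a" and g = "\<lambda>t. (p t, x t)"] by simp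

lemma l1_dist_fiber_weight:
  assumes "finite A" "\<forall>t<T. set_pmf (D t) \<subseteq> A"
  shows "l1_dist T p D =
    (\<Sum>a\<in>A. \<Sum>c\<in>(\<lambda>t. (p t, x t)) ` {..<T}. \<bar>fst c - a\<bar> * fiber_weight T (\<lambda>t. (p t, x t)) D c a)"
proof -
  have "l1_dist T p D = (\<Sum>a\<in>A. \<Sum>t<T. \<bar>p t - a\<bar> * pmf (D t) a)"
    unfolding l1_dist_finite_support[OF assms] by (rule sum.swap)
  also have "\<dots> = (\<Sum>a\<in>A. \<Sum>c\<in>(\<lambda>t. (p t, x t)) ` {..<T}. \<bar>fst c - a\<bar> * fiber_weight T (\<lambda>t. (p t, x t)) D c a)"
  proof (rule sum.cong[OF refl])
    fix a
    show "(\<Sum>t<T. \<bar>p t - a\<bar> * pmf (D t) a) =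
      (\<Sum>c\<in>(\<lambda>t. (p t, x t)) ` {..<T}. \<bar>fst c - a\<bar> * fiber_weight T (\<lambda>t. (p t, x t)) D c a)"
      using sum_pmf_over_fibers[where f = "\<lambda>c. \<bar>fst c - a\<bar>" and g = "\<lambda>t. (p t, x t)"] by simp
  qed
  finally show ?thesis .
qed

lemma lower_cal_set_fiber_weight_rescaling:
  assumes D: "D \<in> lower_cal_set T x" and S: "finite S" "S \<subseteq> {0..1}"
    and D'_supp: "\<forall>t<T. set_pmf (D' t) \<subseteq> S"
    and rescaled: "\<forall>c\<in>(\<lambda>t. (p t, x t)) ` {..<T}. \<forall>a\<in>S.
      fiber_weight T (\<lambda>t. (p t, x t)) D' c a = \<theta> a * fiber_weight T (\<lambda>t. (p t, x t)) D c a"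
  shows "D' \<in> lower_cal_set T x"
proof -
  have "(\<Sum>t<T. (x t - a) * pmf (D' t) a) = 0" for a
  proof (cases "a \<in> S")
    case True
    have "(\<Sum>t<T. (x t - a) * pmf (D' t) a) =
        \<theta> a * (\<Sum>c\<in>(\<lambda>t. (p t, x t)) ` {..<T}. (snd c - a) * fiber_weight T (\<lambda>t. (p t, x t)) D c a)"
      unfolding calibration_sum_fiber_weight[where p = p] sum_distrib_left
    proof (rule sum.cong[OF refl])
      fix c assume "c \<in> (\<lambda>t. (p t, x t)) ` {..<T}"
      from rescaled[rule_format, OF this True]
      show "(snd c - a) * fiber_weight T (\<lambda>t. (p t, x t)) D' c a =
          \<theta> a * ((snd c - a) * fiber_weight T (\<lambda>t. (p t, x t)) D c a)"
        by (simp add: mult.left_commute)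
    qed
    also have "\<dots> = \<theta> a * (\<Sum>t<T. (x t - a) * pmf (D t) a)"
      by (simp add: calibration_sum_fiber_weight[where p = p])
    also have "\<dots> = 0" using D S(2) True by (auto simp: lower_cal_set_def)
    finally show ?thesis .
  next
    case False
    then show ?thesis using D'_supp by (auto simp: pmf_eq_0_set_pmf subset_iff intro!: sum.neutral)
  qed
  then show ?thesis using D'_supp S unfolding lower_cal_set_def by (blast intro: finite_subset)
qed

lemma lower_cal_set_sparse_support:
  assumes D: "D \<in> lower_cal_set T x"
  shows "\<exists>S D'. S \<subseteq> {0..1} \<and> finite S \<and> card S \<le> card ((\<lambda>t. (p t, x t)) ` {..<T}) \<and>
    (\<forall>t<T. set_pmf (D' t) \<subseteq> S) \<and> D' \<in> lower_cal_set T x \<and> l1_dist T p D' \<le> l1_dist T p D"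
proof -
  define g where "g t = (p t, x t)" for t
  define C where "C = g ` {..<T}"
  define U where "U = (\<Union>t<T. set_pmf (D t))"
  define W where "W = fiber_weight T g D"
  have U: "finite U" "U \<subseteq> {0..1}" and D_supp: "\<forall>t<T. set_pmf (D t) \<subseteq> U"
    using D by (auto simp: lower_cal_set_def U_def)
  have C_fin: "finite C" by (simp add: C_def)
  have W_nonneg: "\<forall>c\<in>C. \<forall>a\<in>U. 0 \<le> W c a" by (simp add: W_def fiber_weight_nonneg)
  obtain S \<theta> where S: "S \<subseteq> U" "card S \<le> card C" "\<forall>a\<in>S. 0 \<le> \<theta> a"
    and rows: "\<forall>c\<in>C. (\<Sum>a\<in>S. \<theta> a * W c a) = (\<Sum>a\<in>U. W c a)"
    and cost: "(\<Sum>a\<in>S. \<Sum>c\<in>C. \<bar>fst c - a\<bar> * (\<theta> a * W c a)) \<le> (\<Sum>a\<in>U. \<Sum>c\<in>C. \<bar>fst c - a\<bar> * W c a)"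
    using sparse_column_rescaling[OF C_fin U(1) W_nonneg, of "\<lambda>c a. \<bar>fst c - a\<bar>"] by blast
  have S_fin: "finite S" using S(1) U(1) by (rule finite_subset)
  have S_unit: "S \<subseteq> {0..1}" using S(1) U(2) by blast
  have "(\<Sum>a\<in>U. W c a) = card {t\<in>{..<T}. g t = c}" for c
    unfolding W_def by (rule sum_fiber_weight[OF U(1) D_supp])
  then have "\<forall>c\<in>g ` {..<T}. (\<Sum>a\<in>S. \<theta> a * W c a) = card {t\<in>{..<T}. g t = c}"
    using rows by (simp add: C_def)
  moreover have "\<forall>c\<in>g ` {..<T}. \<forall>a\<in>S. 0 \<le> \<theta> a * W c a"
    using S(3) by (simp add: W_def fiber_weight_nonneg)
  ultimately obtain D' where D'_supp: "\<forall>t<T. set_pmf (D' t) \<subseteq> S"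
    and W': "\<forall>c\<in>C. \<forall>a\<in>S. fiber_weight T g D' c a = \<theta> a * W c a"
    using fiber_weight_realizable[OF S_fin, where V = "\<lambda>c a. \<theta> a * W c a"] unfolding C_def by blast
  have "D' \<in> lower_cal_set T x"
    using lower_cal_set_fiber_weight_rescaling[OF D S_fin S_unit D'_supp] W'
    unfolding C_def g_def W_def by blast
  moreover have "l1_dist T p D' \<le> l1_dist T p D"
  proof -
    have "l1_dist T p D' = (\<Sum>a\<in>S. \<Sum>c\<in>C. \<bar>fst c - a\<bar> * (\<theta> a * W c a))"
      unfolding l1_dist_fiber_weight[OF S_fin D'_supp, where x = x] g_def[symmetric] C_def[symmetric]
      using W' by (intro sum.cong refl) simp
    also have "\<dots> \<le> (\<Sum>a\<in>U. \<Sum>c\<in>C. \<bar>fst c - a\<bar> * W c a)" by (rule cost)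
    also have "\<dots> = l1_dist T p D"
      unfolding l1_dist_fiber_weight[OF U(1) D_supp, where x = x] g_def[symmetric] C_def[symmetric] W_def ..
    finally show ?thesis .
  qed
  moreover have "C = (\<lambda>t. (p t, x t)) ` {..<T}" by (simp add: C_def g_def)
  ultimately show ?thesis
    using S_fin S_unit S(2) D'_supp by (intro exI[of _ S] exI[of _ D']) auto
qed

lemma l1_dist_nonneg: "0 \<le> l1_dist T p D"
  unfolding l1_dist_def by (intro sum_nonneg integral_nonneg_AE) auto

lemma return_mean_in_lower_cal_set:
  assumes "\<forall>t<T. x t \<in> {0..1}"
  shows "(\<lambda>_. return_pmf ((\<Sum>t<T. x t) / T)) \<in> lower_cal_set T x"
proof -
  define \<mu> where "\<mu> = (\<Sum>t<T. x t) / T"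
  have "\<mu> \<in> {0..1}"
  proof (cases "T = 0")
    case False
    have "0 \<le> (\<Sum>t<T. x t)" using assms by (intro sum_nonneg) auto
    moreover have "(\<Sum>t<T. x t) \<le> (\<Sum>t<T. 1)" using assms by (intro sum_mono) auto
    ultimately show ?thesis using False by (simp add: \<mu>_def divide_simps)
  qed (simp add: \<mu>_def)
  moreover have "(\<Sum>t<T. (x t - a) * pmf (return_pmf \<mu>) a) = 0" for a
  proof (cases "T = 0 \<or> a \<noteq> \<mu>")
    case False
    then have "(\<Sum>t<T. (x t - a)) = 0" by (simp add: \<mu>_def sum_subtractf)
    then show ?thesis by (simp add: pmf_return sum_distrib_right[symmetric])
  qed (auto simp: pmf_return)
  ultimately show ?thesis by (simp add: lower_cal_set_def \<mu>_def)
qed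

lemma LowerCalDist_nonneg:
  assumes "\<forall>t<T. x t \<in> {0..1}"
  shows "0 \<le> LowerCalDist T x p"
  unfolding LowerCalDist_def
  using return_mean_in_lower_cal_set[OF assms] l1_dist_nonneg by (intro cINF_greatest) auto

lemma LowerCalDist_approx:
  assumes "\<forall>t<T. x t \<in> {0..1}" and "0 < \<epsilon>"
  shows "\<exists>D\<in>lower_cal_set T x. l1_dist T p D < LowerCalDist T x p + \<epsilon>"
proof -
  have "lower_cal_set T x \<noteq> {}" using return_mean_in_lower_cal_set[OF assms(1)] by blast
  moreover have "bdd_below (l1_dist T p ` lower_cal_set T x)"
    using l1_dist_nonneg by (intro bdd_belowI2)
  ultimately have "LowerCalDist T x p < r \<longleftrightarrow> (\<exists>D\<in>lower_cal_set T x. l1_dist T p D < r)" for r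
    unfolding LowerCalDist_def by (rule cINF_less_iff)
  then show ?thesis using assms(2) by (metis less_add_same_cancel1)
qed

lemma card_image_pair_le:
  fixes x :: "'a \<Rightarrow> 'b::zero_neq_one"
  assumes "finite A" "\<forall>t\<in>A. x t \<in> {0, 1}"
  shows "card ((\<lambda>t. (p t, x t)) ` A) \<le> 2 * card (p ` A)"
proof -
  have "card ((\<lambda>t. (p t, x t)) ` A) \<le> card (p ` A \<times> {0, 1 :: 'b})"
    using assms by (intro card_mono) auto
  also have "\<dots> = 2 * card (p ` A)" by (simp add: card_cartesian_product)
  finally show ?thesis .
qed

theorem lemma4:
  fixes T :: nat and x p :: "nat \<Rightarrow> real" and m :: nat and \<epsilon> :: real
  assumes "T > 0"
    and "\<forall>t<T. x t \<in> {0, 1}"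
    and "\<forall>t<T. p t \<in> {0..1}"
    and "m = card (p ` {..<T})"
    and "\<epsilon> > 0"
  shows "\<exists>S D. S \<subseteq> {0..1} \<and> finite S \<and> card S \<le> 2 * m + 3 \<and>
           (\<forall>t<T. set_pmf (D t) \<subseteq> S) \<and>
           D \<in> lower_cal_set T x \<and>
           l1_dist T p D \<le> 20 * LowerCalDist T x p + \<epsilon>"
proof -
  have x_unit: "\<forall>t<T. x t \<in> {0..1}" using assms(2) by auto
  obtain D where D: "D \<in> lower_cal_set T x" "l1_dist T p D < LowerCalDist T x p + \<epsilon>"
    using LowerCalDist_approx[OF x_unit assms(5)] by blast
  obtain S D' where S: "S \<subseteq> {0..1}" "finite S" "card S \<le> card ((\<lambda>t. (p t, x t)) ` {..<T})"
    "\<forall>t<T. set_pmf (D' t) \<subseteq> S" "D' \<in> lower_cal_set T x" and D'_le: "l1_dist T p D' \<le> l1_dist T p D"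
    using lower_cal_set_sparse_support[OF D(1), where p = p] by blast
  have "card ((\<lambda>t. (p t, x t)) ` {..<T}) \<le> 2 * m"
    using card_image_pair_le[of "{..<T}" x p] assms(2,4) by simp
  then have "card S \<le> 2 * m + 3" using S(3) by linarith
  moreover have "l1_dist T p D' \<le> 20 * LowerCalDist T x p + \<epsilon>"
    using D'_le D(2) LowerCalDist_nonneg[OF x_unit, of p] by linarith
  ultimately show ?thesis using S(1,2,4,5) by blast
qed

end
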